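(* Assume $\mathcal{R}(\Theta^* )\le r$, $\mathcal{R}^*(\Phi(x))\le d$ for all $x\in\mathcal{X}$, and $\|\Phi(x)\|_{\max}\le\phi_{\max}$ for all $x\in\mathcal{X}$. Then for any $\delta\in(0,1)$ and $\epsilon>0$, $\|\nabla\mathcal{L}_n(\Theta^* )\|_{\max}\le\epsilon$ with probability at least $1-\delta$ as long as $n>\frac{8\phi_{\max}^2\exp(4rd)}{\epsilon^2}\log\big(\frac{2k_1k_2}{\delta}\big)$.
   Context: Let $\mathcal{X}\subset\mathbb{R}^p$ be a bounded set with finite positive volume and $\mathcal{U}_{\mathcal{X}}$ the uniform distribution on it. $\Phi:\mathcal{X}\to\mathbb{R}^{k_1\times k_2}$ is a natural statistic, $\langle\langle M,N\rangle\rangle=\sum_{i,j}M_{ij}N_{ij}$, $f_{\mathbf{x}}(x;\Theta)\propto\exp(\langle\langle\Theta,\Phi(x)\rangle\rangle)$ on $\mathcal{X}$. $\mathcal{R}$ is a norm with dual norm $\mathcal{R}^*(M)=\sup\{\langle\langle M,N\rangle\rangle:\mathcal{R}(N)\le1\}$; $r,d,\phi_{\max}$ constants; $\|M\|_{\max}=\max_{ij}|M_{ij}|$. $x^{(1)},\dots,x^{(n)}$ i.i.d. from $f_{\mathbf{x}}(\cdot;\Theta^* )$; $\tilde\Phi(x)=\Phi(x)-\mathbb{E}_{\mathcal{U}_{\mathcal{X}}}[\Phi]$; $\mathcal{L}_n(\Theta)=\frac1n\sum_{t=1}^n\exp(-\langle\langle\Theta,\tilde\Phi(x^{(t)})\rangle\rangle)$,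 with $\nabla\mathcal{L}_n(\Theta^* )$ the $k_1\times k_2$ matrix of partial derivatives $\partial\mathcal{L}_n/\partial\Theta_{uv}$ at $\Theta^*$. *)

theory Defs
  imports "HOL-Probability.Probability"
begin

type_synonym ('k1, 'k2) mat = "real ^ 'k2 ^ 'k1"

definition frob_ip :: "('k1::finite, 'k2::finite) mat \<Rightarrow> ('k1, 'k2) mat \<Rightarrow> real" where
  "frob_ip M N = (\<Sum>i\<in>UNIV. \<Sum>j\<in>UNIV. M $ i $ j * N $ i $ j)"

definition max_norm :: "('k1::finite, 'k2::finite) mat \<Rightarrow> real" where
  "max_norm M = Max (range (\<lambda>(i, j). \<bar>M $ i $ j\<bar>))"

definition is_norm :: "(('k1::finite, 'k2::finite) mat \<Rightarrow> real) \<Rightarrow> bool" where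
  "is_norm R \<longleftrightarrow> (\<forall>M. 0 \<le> R M) \<and> (\<forall>M. R M = 0 \<longleftrightarrow> M = 0)
     \<and> (\<forall>c M. R (c *\<^sub>R M) = \<bar>c\<bar> * R M) \<and> (\<forall>M N. R (M + N) \<le> R M + R N)"

definition dual_norm :: "(('k1::finite, 'k2::finite) mat \<Rightarrow> real) \<Rightarrow> ('k1, 'k2) mat \<Rightarrow> real" where
  "dual_norm R M = Sup {frob_ip M N | N. R N \<le> 1}"

definition exp_fam_density ::
  "'p::euclidean_space set \<Rightarrow> ('p \<Rightarrow> ('k1::finite, 'k2::finite) mat) \<Rightarrow> ('k1, 'k2) mat \<Rightarrow> 'p \<Rightarrow> real" where
  "exp_fam_density X \<Phi> \<Theta> x =
     indicator X x * exp (frob_ip \<Theta> (\<Phi> x)) /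
     (\<integral>y. indicator X y * exp (frob_ip \<Theta> (\<Phi> y)) \<partial>lebesgue)"

definition exp_fam_dist ::
  "'p::euclidean_space set \<Rightarrow> ('p \<Rightarrow> ('k1::finite, 'k2::finite) mat) \<Rightarrow> ('k1, 'k2) mat \<Rightarrow> 'p measure" where
  "exp_fam_dist X \<Phi> \<Theta> = density lebesgue (\<lambda>x. ennreal (exp_fam_density X \<Phi> \<Theta> x))"

definition Phi_tilde ::
  "'p::euclidean_space set \<Rightarrow> ('p \<Rightarrow> ('k1::finite, 'k2::finite) mat) \<Rightarrow> 'p \<Rightarrow> ('k1, 'k2) mat" where
  "Phi_tilde X \<Phi> x = \<Phi> x - (1 / measure lebesgue X) *\<^sub>R (\<integral>y. indicator X y *\<^sub>R \<Phi> y \<partial>lebesgue)"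

definition loss_n ::
  "'p::euclidean_space set \<Rightarrow> ('p \<Rightarrow> ('k1::finite, 'k2::finite) mat) \<Rightarrow> nat \<Rightarrow> (nat \<Rightarrow> 'p)
     \<Rightarrow> ('k1, 'k2) mat \<Rightarrow> real" where
  "loss_n X \<Phi> n xs \<Theta> = (1 / real n) * (\<Sum>t<n. exp (- frob_ip \<Theta> (Phi_tilde X \<Phi> (xs t))))"

definition unit_mat :: "'k1::finite \<Rightarrow> 'k2::finite \<Rightarrow> ('k1, 'k2) mat" where
  "unit_mat u v = (\<chi> i j. if i = u \<and> j = v then 1 else 0)"

definition grad_loss_n ::
  "'p::euclidean_space set \<Rightarrow> ('p \<Rightarrow> ('k1::finite, 'k2::finite) mat) \<Rightarrow> nat \<Rightarrow> (nat \<Rightarrow> 'p)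
     \<Rightarrow> ('k1, 'k2) mat \<Rightarrow> ('k1, 'k2) mat" where
  "grad_loss_n X \<Phi> n xs \<Theta> =
     (\<chi> u v. deriv (\<lambda>s. loss_n X \<Phi> n xs (\<Theta> + s *\<^sub>R unit_mat u v)) 0)"

end

theory Submission
  imports Defs
begin

(* Entry (u,v) of the gradient at Theta* is the sample mean of
   Y(x) = - Phi~_uv(x) * exp (- <Theta*, Phi~(x)>).  Under the model density for Theta* the
   density cancels the exponential weight up to a constant, so E Y is a multiple of the uniform
   mean of the centred entry Phi~_uv, which is zero.  Hoelder's inequality for R and its dual gives
   |<Theta*, Phi(x)>| <= r d, hence |<Theta*, Phi~(x)>| <= 2 r d and |Y| <= 2 phi_max exp (2 r d).
   Hoeffding's inequality bounds the probability that one entry exceeds eps by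
   2 exp (- n eps^2 / (8 phi_max^2 exp (4 r d))) < delta / (k1 k2), and a union bound over the
   k1 k2 entries concludes. *)

section \<open>Matrices, the norm R and its dual\<close>

lemma frob_ip_eq_inner: "frob_ip M N = inner M N"
  unfolding frob_ip_def inner_vec_def by simp

lemma frob_ip_unit_mat: "frob_ip (unit_mat u v) M = M $ u $ v"
proof -
  have "unit_mat u v = axis u (axis v 1)"
    by (simp add: unit_mat_def axis_def vec_eq_iff)
  then show ?thesis by (simp add: frob_ip_eq_inner inner_commute inner_axis inner_axis')
qed

lemma max_norm_le_iff: "max_norm M \<le> c \<longleftrightarrow> (\<forall>i j. \<bar>M $ i $ j\<bar> \<le> c)"
  unfolding max_norm_def by (subst Max_le_iff) auto

lemma bounded_linear_mat_entry: "bounded_linear (\<lambda>A :: real ^ 'k2 ^ 'k1. A $ u $ v)"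
  using bounded_linear_compose[OF bounded_linear_vec_nth[of v] bounded_linear_vec_nth[of u]] by simp

lemma norm_le_entry_bound:
  fixes M :: "real ^ 'k2::finite ^ 'k1::finite"
  assumes "\<And>i j. \<bar>M $ i $ j\<bar> \<le> c"
  shows "norm M \<le> real CARD('k1) * real CARD('k2) * c"
proof -
  have "norm M \<le> (\<Sum>i\<in>UNIV. norm (M $ i))"
    unfolding norm_vec_def by (rule L2_set_le_sum) simp
  also have "\<dots> \<le> (\<Sum>i\<in>UNIV. \<Sum>j\<in>UNIV. \<bar>M $ i $ j\<bar>)"
    by (intro sum_mono) (simp add: norm_le_l1_cart)
  also have "\<dots> \<le> (\<Sum>i\<in>(UNIV::'k1 set). \<Sum>j\<in>(UNIV::'k2 set). c)"
    using assms by (intro sum_mono) auto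
  finally show ?thesis by simp
qed

lemma is_normD:
  assumes "is_norm R"
  shows "0 \<le> R M" "R M = 0 \<longleftrightarrow> M = 0" "R (c *\<^sub>R M) = \<bar>c\<bar> * R M" "R (M + N) \<le> R M + R N"
    and "R 0 = 0"
  using assms unfolding is_norm_def by auto

lemma is_norm_convex_on:
  assumes "is_norm R"
  shows "convex_on UNIV R"
proof (rule convex_onI[OF _ convex_UNIV])
  fix t :: real and M N assume "0 < t" "t < 1"
  then show "R ((1 - t) *\<^sub>R M + t *\<^sub>R N) \<le> (1 - t) * R M + t * R N"
    using is_normD(3,4)[OF assms] by (metis abs_of_pos abs_of_nonneg diff_ge_0_iff_ge less_imp_le)
qed

lemma is_norm_ge_norm:
  fixes R :: "real ^ 'k2::finite ^ 'k1::finite \<Rightarrow> real"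
  assumes "is_norm R"
  obtains m where "0 < m" "\<And>N. m * norm N \<le> R N"
proof -
  have "continuous_on (sphere 0 1) R"
    using convex_on_continuous[OF open_UNIV is_norm_convex_on[OF assms]] continuous_on_subset by blast
  then obtain N0 where N0: "N0 \<in> sphere 0 1" "\<And>N. N \<in> sphere 0 1 \<Longrightarrow> R N0 \<le> R N"
    using continuous_attains_inf[of "sphere (0 :: real ^ 'k2 ^ 'k1) 1" R] by auto
  then have "0 < R N0"
    using is_normD(1,2)[OF assms, of N0] by fastforce
  moreover have "R N0 * norm N \<le> R N" for N
  proof (cases "N = 0")
    case False
    then have "R N0 \<le> R ((1 / norm N) *\<^sub>R N)" by (intro N0(2)) simp
    also have "\<dots> = R N / norm N" using is_normD(3)[OF assms] by simp
    finally show ?thesis using False by (simp add: field_simps)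
  qed (simp add: is_normD(5)[OF assms])
  ultimately show thesis by (rule that)
qed

lemma bdd_above_dual_norm:
  fixes R :: "real ^ 'k2::finite ^ 'k1::finite \<Rightarrow> real"
  assumes "is_norm R"
  shows "bdd_above {frob_ip M N | N. R N \<le> 1}"
proof -
  obtain m where m: "0 < m" "\<And>N. m * norm N \<le> R N" using is_norm_ge_norm[OF assms] by blast
  show ?thesis
  proof (rule bdd_aboveI[of _ "norm M / m"], safe)
    fix N assume "R N \<le> 1"
    then have "norm N \<le> 1 / m"
      using m by (simp add: field_simps order_trans[OF m(2)])
    then have "norm M * norm N \<le> norm M / m"
      using mult_left_mono[of "norm N" "1 / m" "norm M"] by simp
    then show "frob_ip M N \<le> norm M / m"
      unfolding frob_ip_eq_inner using norm_cauchy_schwarz order_trans by blast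
  qed
qed

lemma dual_norm_nonneg:
  assumes "is_norm R"
  shows "0 \<le> dual_norm R M"
proof -
  have "frob_ip M 0 \<le> dual_norm R M"
    unfolding dual_norm_def using is_normD(2)[OF assms, of 0]
    by (intro cSup_upper bdd_above_dual_norm[OF assms]) auto
  then show ?thesis by (simp add: frob_ip_eq_inner)
qed

lemma frob_ip_le_dual_norm:
  assumes "is_norm R"
  shows "frob_ip T M \<le> R T * dual_norm R M"
proof (cases "T = 0")
  case False
  then have RT: "0 < R T" using is_normD(1,2)[OF assms, of T] by auto
  then have "R ((1 / R T) *\<^sub>R T) = 1" using is_normD(3)[OF assms] by simp
  then have "frob_ip M ((1 / R T) *\<^sub>R T) \<le> dual_norm R M" unfolding dual_norm_def
    by (intro cSup_upper bdd_above_dual_norm[OF assms]) auto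
  with RT show ?thesis by (simp add: frob_ip_eq_inner inner_commute field_simps)
qed (simp add: is_normD(5)[OF assms] frob_ip_eq_inner)

lemma abs_frob_ip_le_dual_norm:
  assumes "is_norm R"
  shows "\<bar>frob_ip T M\<bar> \<le> R T * dual_norm R M"
  using frob_ip_le_dual_norm[OF assms, of T M] frob_ip_le_dual_norm[OF assms, of "- T" M]
    is_normD(3)[OF assms, of "-1" T]
  by (simp add: frob_ip_eq_inner)

lemma abs_frob_ip_le_of_bounds:
  assumes "is_norm R" "R T \<le> r" "dual_norm R M \<le> d"
  shows "\<bar>frob_ip T M\<bar> \<le> r * d"
proof -
  have "\<bar>frob_ip T M\<bar> \<le> R T * dual_norm R M"
    by (rule abs_frob_ip_le_dual_norm[OF assms(1)])
  also have "\<dots> \<le> r * d"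
    using assms is_normD(1)[OF assms(1)] dual_norm_nonneg[OF assms(1)]
    by (intro mult_mono) (auto intro: order_trans)
  finally show ?thesis .
qed

section \<open>Hoeffding's inequality for i.i.d. samples\<close>

lemma indep_vars_PiM_components:
  assumes "\<And>i. i \<in> I \<Longrightarrow> prob_space (M i)" "I \<noteq> {}"
  shows "prob_space.indep_vars (PiM I M) M (\<lambda>i x. x i) I"
proof -
  interpret prob_space "PiM I M"
    using assms(1) by (rule prob_space_PiM)
  have "distr (PiM I M) (PiM I M) (\<lambda>x. \<lambda>i\<in>I. x i) = distr (PiM I M) (PiM I M) (\<lambda>x. x)"
    by (intro distr_cong) (auto simp: space_PiM extensional_restrict)
  also have "\<dots> = PiM I (\<lambda>i. distr (PiM I M) (M i) (\<lambda>x. x i))"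
    using assms(1) by (auto simp: distr_PiM_component intro: PiM_cong)
  finally show ?thesis
    using assms(2) by (subst indep_vars_iff_distr_eq_PiM') auto
qed

lemma prob_abs_sum_iid_ge:
  fixes Y :: "'a \<Rightarrow> real"
  assumes P: "prob_space P" and Y: "Y \<in> borel_measurable P"
    and bound: "AE x in P. \<bar>Y x\<bar> \<le> B" and mean: "(\<integral>x. Y x \<partial>P) = 0"
    and "0 < n" "0 < B" "0 \<le> \<epsilon>"
  shows "measure (PiM {..<n} (\<lambda>_. P)) {xs \<in> space (PiM {..<n} (\<lambda>_. P)). real n * \<epsilon> \<le> \<bar>\<Sum>t<n. Y (xs t)\<bar>}
           \<le> 2 * exp (- (real n * \<epsilon>\<^sup>2 / (2 * B\<^sup>2)))"
proof -
  let ?M = "PiM {..<n} (\<lambda>_. P)"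
  interpret M: prob_space ?M
    using P by (rule prob_space_PiM)
  have indep: "M.indep_vars (\<lambda>_. borel) (\<lambda>t xs. Y (xs t)) {..<n}"
    using indep_vars_PiM_components[of "{..<n}" "\<lambda>_. P"] P \<open>0 < n\<close> Y
    by (intro M.indep_vars_compose2[where Y = "\<lambda>_. Y"]) auto
  have Y_interval: "AE x in P. Y x \<in> {-B..B}"
    using bound by eventually_elim (simp add: abs_le_iff)
  have AE_interval: "AE xs in ?M. Y (xs t) \<in> {-B..B}" if "t \<in> {..<n}" for t
    by (rule AE_PiM_component[where M = "\<lambda>_. P" and i = t, OF _ _ Y_interval]) (use P that in auto)
  have expectation: "M.expectation (\<lambda>xs. Y (xs t)) = 0" if "t \<in> {..<n}" for t
    using integral_distr[of "\<lambda>xs. xs t" ?M P Y] distr_PiM_component[of "{..<n}" "\<lambda>_. P" t] P Y mean that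
    by simp
  interpret Hoeffding_ineq ?M "{..<n}" "\<lambda>t xs. Y (xs t)" "\<lambda>_. - B" "\<lambda>_. B" 0
    by unfold_locales (use indep AE_interval expectation in auto)
  have "M.prob {xs \<in> space ?M. real n * \<epsilon> \<le> \<bar>(\<Sum>t<n. Y (xs t)) - 0\<bar>}
      \<le> 2 * exp (- 2 * (real n * \<epsilon>)\<^sup>2 / (\<Sum>t<n. (B - - B)\<^sup>2))"
    using \<open>0 < n\<close> \<open>0 < B\<close> \<open>0 \<le> \<epsilon>\<close> by (intro Hoeffding_ineq_abs_ge) auto
  also have "- 2 * (real n * \<epsilon>)\<^sup>2 / (\<Sum>t<n. (B - - B)\<^sup>2) = - (real n * \<epsilon>\<^sup>2 / (2 * B\<^sup>2))"
    using \<open>0 < n\<close> \<open>0 < B\<close> by (simp add: power2_eq_square field_simps)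
  finally show ?thesis by simp
qed

lemma prob_abs_sum_iid_ge_sample_size:
  fixes Y :: "'a \<Rightarrow> real"
  assumes P: "prob_space P" and Y: "Y \<in> borel_measurable P"
    and bound: "AE x in P. \<bar>Y x\<bar> \<le> B" and mean: "(\<integral>x. Y x \<partial>P) = 0"
    and "0 \<le> B" "0 < L" "0 < \<epsilon>" and n: "2 * B\<^sup>2 * L / \<epsilon>\<^sup>2 < real n"
  shows "measure (PiM {..<n} (\<lambda>_. P)) {xs \<in> space (PiM {..<n} (\<lambda>_. P)). real n * \<epsilon> \<le> \<bar>\<Sum>t<n. Y (xs t)\<bar>}
           \<le> 2 * exp (- L)"
proof -
  have "0 \<le> 2 * B\<^sup>2 * L / \<epsilon>\<^sup>2"
    using \<open>0 < L\<close> by simp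
  then have "0 < n"
    using n by linarith
  \<comment> \<open>Hoeffding for the larger bound B' gives exactly the exponent L; also B' > 0 even if B = 0.\<close>
  define B' where "B' = sqrt (real n * \<epsilon>\<^sup>2 / (2 * L))"
  have "B < B'"
    unfolding B'_def using n \<open>0 < L\<close> \<open>0 < \<epsilon>\<close> by (intro real_less_rsqrt) (simp add: field_simps)
  have "AE x in P. \<bar>Y x\<bar> \<le> B'"
    using bound by eventually_elim (use \<open>B < B'\<close> in auto)
  from prob_abs_sum_iid_ge[OF P Y this mean \<open>0 < n\<close>] \<open>B < B'\<close> \<open>0 \<le> B\<close> \<open>0 < \<epsilon>\<close>
  have "measure (PiM {..<n} (\<lambda>_. P)) {xs \<in> space (PiM {..<n} (\<lambda>_. P)). real n * \<epsilon> \<le> \<bar>\<Sum>t<n. Y (xs t)\<bar>}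
      \<le> 2 * exp (- (real n * \<epsilon>\<^sup>2 / (2 * B'\<^sup>2)))"
    by simp
  also have "real n * \<epsilon>\<^sup>2 / (2 * B'\<^sup>2) = L"
    unfolding B'_def using \<open>0 < n\<close> \<open>0 < L\<close> \<open>0 < \<epsilon>\<close> by (simp add: field_simps)
  finally show ?thesis .
qed

lemma (in prob_space) prob_max_norm_le_ge:
  fixes F :: "'a \<Rightarrow> real ^ 'k2::finite ^ 'k1::finite"
  assumes events: "\<And>u v. {x \<in> space M. \<epsilon> < \<bar>F x $ u $ v\<bar>} \<in> events"
    and tail: "\<And>u v. prob {x \<in> space M. \<epsilon> < \<bar>F x $ u $ v\<bar>} \<le> p"
  shows "1 - real CARD('k1) * real CARD('k2) * p \<le> prob {x \<in> space M. max_norm (F x) \<le> \<epsilon>}"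
proof -
  define A where "A = (\<lambda>(u, v). {x \<in> space M. \<epsilon> < \<bar>F x $ u $ v\<bar>})"
  have "{x \<in> space M. max_norm (F x) \<le> \<epsilon>} = space M - (\<Union>uv. A uv)"
    unfolding A_def max_norm_le_iff by (auto simp: not_less dest: leD)
  moreover have "(\<Union>uv. A uv) \<in> events"
    using events by (intro sets.finite_UN) (auto simp: A_def)
  ultimately have "prob {x \<in> space M. max_norm (F x) \<le> \<epsilon>} = 1 - prob (\<Union>uv. A uv)"
    using prob_compl by simp
  moreover have "prob (\<Union>uv. A uv) \<le> (\<Sum>uv\<in>UNIV. prob (A uv))"
    using events by (intro finite_measure_subadditive_finite) (auto simp: A_def)
  moreover have "(\<Sum>uv\<in>UNIV. prob (A uv)) \<le> (\<Sum>uv\<in>(UNIV :: ('k1 \<times> 'k2) set). p)"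
    using tail by (intro sum_mono) (auto simp: A_def)
  moreover have "(\<Sum>uv\<in>(UNIV :: ('k1 \<times> 'k2) set). p) = real CARD('k1) * real CARD('k2) * p"
    by (simp add: card_cartesian_product flip: UNIV_Times_UNIV)
  ultimately show ?thesis
    by linarith
qed

section \<open>The exponential family and the gradient of the loss\<close>

definition uniform_mean :: "'p::euclidean_space set \<Rightarrow> ('p \<Rightarrow> ('k1::finite, 'k2::finite) mat) \<Rightarrow> ('k1, 'k2) mat"
  where "uniform_mean X \<Phi> = (1 / measure lebesgue X) *\<^sub>R (\<integral>y. indicator X y *\<^sub>R \<Phi> y \<partial>lebesgue)"

lemma Phi_tilde_uniform_mean: "Phi_tilde X \<Phi> x = \<Phi> x - uniform_mean X \<Phi>"
  unfolding Phi_tilde_def uniform_mean_def ..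

definition grad_term ::
  "'p::euclidean_space set \<Rightarrow> ('p \<Rightarrow> ('k1::finite, 'k2::finite) mat) \<Rightarrow> ('k1, 'k2) mat
     \<Rightarrow> 'k1 \<Rightarrow> 'k2 \<Rightarrow> 'p \<Rightarrow> real" where
  "grad_term X \<Phi> \<Theta> u v x = - Phi_tilde X \<Phi> x $ u $ v * exp (- frob_ip \<Theta> (Phi_tilde X \<Phi> x))"

lemma grad_loss_n_entry:
  "grad_loss_n X \<Phi> n xs \<Theta> $ u $ v = (\<Sum>t<n. grad_term X \<Phi> \<Theta> u v (xs t)) / real n"
proof -
  define a where "a t = frob_ip \<Theta> (Phi_tilde X \<Phi> (xs t))" for t
  define b where "b t = Phi_tilde X \<Phi> (xs t) $ u $ v" for t
  have "loss_n X \<Phi> n xs (\<Theta> + s *\<^sub>R unit_mat u v) = 1 / real n * (\<Sum>t<n. exp (- (a t + s * b t)))" for s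
    by (simp add: loss_n_def a_def b_def frob_ip_eq_inner inner_add_left frob_ip_unit_mat[unfolded frob_ip_eq_inner])
  moreover have "((\<lambda>s. 1 / real n * (\<Sum>t<n. exp (- (a t + s * b t)))) has_real_derivative
      1 / real n * (\<Sum>t<n. exp (- (a t + 0 * b t)) * (- (0 + 1 * b t)))) (at 0)"
    by (intro derivative_eq_intros) auto
  ultimately show ?thesis
    by (simp add: grad_loss_n_def grad_term_def DERIV_imp_deriv a_def b_def mult.commute)
qed

lemma grad_term_measurable:
  assumes "\<Phi> \<in> borel_measurable M"
  shows "grad_term X \<Phi> \<Theta> u v \<in> borel_measurable M"
proof -
  have "continuous_on UNIV (\<lambda>A. - (A - c) $ u $ v * exp (- inner \<Theta> (A - c)))" for c
    by (intro continuous_intros)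
  from measurable_compose[OF assms borel_measurable_continuous_onI[OF this]] show ?thesis
    unfolding grad_term_def Phi_tilde_uniform_mean frob_ip_eq_inner .
qed

definition partition_fn ::
  "'p::euclidean_space set \<Rightarrow> ('p \<Rightarrow> ('k1::finite, 'k2::finite) mat) \<Rightarrow> ('k1, 'k2) mat \<Rightarrow> real" where
  "partition_fn X \<Phi> \<Theta> = (\<integral>y. indicator X y * exp (frob_ip \<Theta> (\<Phi> y)) \<partial>lebesgue)"

lemma exp_fam_density_eq:
  "exp_fam_density X \<Phi> \<Theta> x = indicator X x * exp (frob_ip \<Theta> (\<Phi> x)) / partition_fn X \<Phi> \<Theta>"
  unfolding exp_fam_density_def partition_fn_def ..

locale bounded_statistic =
  fixes X :: "'p::euclidean_space set" and \<Phi> :: "'p \<Rightarrow> real ^ 'k2::finite ^ 'k1::finite"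
  assumes X_sets: "X \<in> sets lebesgue" and X_bounded: "bounded X"
    and X_pos: "0 < emeasure lebesgue X"
    and Phi_measurable: "\<Phi> \<in> borel_measurable lebesgue"
    and Phi_bounded: "bounded (\<Phi> ` X)"
begin

lemma X_lmeasurable: "X \<in> lmeasurable"
  using bounded_set_imp_lmeasurable X_bounded X_sets by blast

lemma measure_X_pos: "0 < measure lebesgue X"
  using X_pos X_lmeasurable by (simp add: emeasure_eq_measure2)

lemma emeasure_X_finite: "emeasure lebesgue X < \<infinity>"
  using X_lmeasurable unfolding fmeasurable_def by blast

lemma integrable_indicator_mult:
  fixes h :: "'p \<Rightarrow> real"
  assumes "h \<in> borel_measurable lebesgue" "\<And>y. y \<in> X \<Longrightarrow> \<bar>h y\<bar> \<le> B"
  shows "integrable lebesgue (\<lambda>y. indicator X y * h y)"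
  using integrableI_bounded_set_indicator[OF X_sets assms(1) emeasure_X_finite, of B] assms(2)
  by auto

lemma abs_uniform_average_le:
  fixes h :: "'p \<Rightarrow> real"
  assumes "h \<in> borel_measurable lebesgue" "\<And>y. y \<in> X \<Longrightarrow> \<bar>h y\<bar> \<le> B"
  shows "\<bar>(\<integral>y. indicator X y * h y \<partial>lebesgue) / measure lebesgue X\<bar> \<le> B"
proof -
  have "\<bar>\<integral>y. indicator X y * h y \<partial>lebesgue\<bar> \<le> (\<integral>y. indicator X y * B \<partial>lebesgue)"
    using assms X_lmeasurable
    by (intro integral_abs_bound_integral integrable_indicator_mult)
       (auto simp: indicator_def lmeasurable_iff_integrable)
  also have "\<dots> = B * measure lebesgue X"
    using X_lmeasurable by (simp add: lmeasurable_iff_integrable integral_indicator mult.commute)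
  finally show ?thesis using measure_X_pos by (simp add: field_simps)
qed

lemma integrable_indicator_scaleR_Phi: "integrable lebesgue (\<lambda>y. indicator X y *\<^sub>R \<Phi> y)"
proof -
  obtain K where "\<forall>y\<in>X. norm (\<Phi> y) \<le> K"
    using Phi_bounded by (auto simp: bounded_iff)
  then show ?thesis
    using integrableI_bounded_set_indicator[OF X_sets Phi_measurable emeasure_X_finite, of K]
    by auto
qed

lemma linear_Phi_measurable:
  assumes "bounded_linear f"
  shows "(\<lambda>y. f (\<Phi> y)) \<in> borel_measurable lebesgue"
  using measurable_compose[OF Phi_measurable borel_measurable_continuous_onI[OF linear_continuous_on[OF assms]]] .

lemma linear_uniform_mean:
  fixes f :: "real ^ 'k2 ^ 'k1 \<Rightarrow> real"
  assumes "bounded_linear f"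
  shows "f (uniform_mean X \<Phi>) = (\<integral>y. indicator X y * f (\<Phi> y) \<partial>lebesgue) / measure lebesgue X"
proof -
  interpret f: bounded_linear f by fact
  show ?thesis
    using integral_bounded_linear[OF assms integrable_indicator_scaleR_Phi]
    by (simp add: uniform_mean_def f.scaleR)
qed

lemma abs_linear_uniform_mean_le:
  fixes f :: "real ^ 'k2 ^ 'k1 \<Rightarrow> real"
  assumes "bounded_linear f" "\<And>x. x \<in> X \<Longrightarrow> \<bar>f (\<Phi> x)\<bar> \<le> B"
  shows "\<bar>f (uniform_mean X \<Phi>)\<bar> \<le> B"
  unfolding linear_uniform_mean[OF assms(1)]
  using abs_uniform_average_le[OF linear_Phi_measurable[OF assms(1)] assms(2)] .

lemma abs_Phi_tilde_entry_le:
  assumes "\<forall>x\<in>X. max_norm (\<Phi> x) \<le> \<phi>" "x \<in> X"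
  shows "\<bar>Phi_tilde X \<Phi> x $ u $ v\<bar> \<le> 2 * \<phi>"
proof -
  have "\<bar>uniform_mean X \<Phi> $ u $ v\<bar> \<le> \<phi>"
    using abs_linear_uniform_mean_le[OF bounded_linear_mat_entry] assms(1)
    by (simp add: max_norm_le_iff)
  moreover have "\<bar>\<Phi> x $ u $ v\<bar> \<le> \<phi>"
    using assms by (auto simp: max_norm_le_iff)
  ultimately show ?thesis
    unfolding Phi_tilde_uniform_mean by simp
qed

lemma abs_frob_ip_Phi_tilde_le:
  assumes "\<forall>x\<in>X. \<bar>frob_ip \<Theta> (\<Phi> x)\<bar> \<le> c" "x \<in> X"
  shows "\<bar>frob_ip \<Theta> (Phi_tilde X \<Phi> x)\<bar> \<le> 2 * c"
proof -
  have "\<bar>frob_ip \<Theta> (uniform_mean X \<Phi>)\<bar> \<le> c"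
    using abs_linear_uniform_mean_le[OF bounded_linear_inner_right, of \<Theta> c] assms(1)
    by (simp add: frob_ip_eq_inner)
  moreover have "\<bar>frob_ip \<Theta> (\<Phi> x)\<bar> \<le> c"
    using assms by blast
  ultimately show ?thesis
    unfolding Phi_tilde_uniform_mean frob_ip_eq_inner inner_diff_right by linarith
qed

lemma abs_grad_term_le:
  assumes "\<forall>x\<in>X. max_norm (\<Phi> x) \<le> \<phi>" "\<forall>x\<in>X. \<bar>frob_ip \<Theta> (\<Phi> x)\<bar> \<le> c" "x \<in> X"
  shows "\<bar>grad_term X \<Phi> \<Theta> u v x\<bar> \<le> 2 * \<phi> * exp (2 * c)"
proof -
  have entry: "\<bar>Phi_tilde X \<Phi> x $ u $ v\<bar> \<le> 2 * \<phi>"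
    using abs_Phi_tilde_entry_le[OF assms(1,3)] .
  then have "0 \<le> 2 * \<phi>"
    by (rule order_trans[OF abs_ge_zero])
  moreover have "exp (- frob_ip \<Theta> (Phi_tilde X \<Phi> x)) \<le> exp (2 * c)"
    using abs_frob_ip_Phi_tilde_le[OF assms(2,3)] by simp
  ultimately show ?thesis
    using entry unfolding grad_term_def abs_mult by (intro mult_mono) auto
qed

lemma abs_frob_ip_Phi_bounded:
  obtains c where "\<forall>x\<in>X. \<bar>frob_ip \<Theta> (\<Phi> x)\<bar> \<le> c"
proof -
  obtain K where K: "\<forall>x\<in>X. norm (\<Phi> x) \<le> K"
    using Phi_bounded by (auto simp: bounded_iff)
  have "\<bar>frob_ip \<Theta> (\<Phi> x)\<bar> \<le> norm \<Theta> * K" if "x \<in> X" for x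
    unfolding frob_ip_eq_inner
    by (rule order_trans[OF Cauchy_Schwarz_ineq2 mult_left_mono]) (use K that in auto)
  then show thesis using that by blast
qed

lemma integrable_exp_frob_ip:
  "integrable lebesgue (\<lambda>y. indicator X y * exp (frob_ip \<Theta> (\<Phi> y)))"
proof -
  obtain c where "\<forall>x\<in>X. \<bar>frob_ip \<Theta> (\<Phi> x)\<bar> \<le> c"
    using abs_frob_ip_Phi_bounded .
  moreover have "(\<lambda>y. exp (frob_ip \<Theta> (\<Phi> y))) \<in> borel_measurable lebesgue"
    using Phi_measurable unfolding frob_ip_eq_inner by measurable
  ultimately show ?thesis
    by (intro integrable_indicator_mult[of _ "exp c"]) auto
qed

lemma partition_fn_pos: "0 < partition_fn X \<Phi> \<Theta>"
proof -
  obtain c where c: "\<forall>x\<in>X. \<bar>frob_ip \<Theta> (\<Phi> x)\<bar> \<le> c"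
    using abs_frob_ip_Phi_bounded .
  have "0 < exp (- c) * measure lebesgue X"
    using measure_X_pos by simp
  also have "\<dots> = (\<integral>y. indicator X y * exp (- c) \<partial>lebesgue)"
    using X_lmeasurable by (simp add: lmeasurable_iff_integrable integral_indicator mult.commute)
  also have "\<dots> \<le> partition_fn X \<Phi> \<Theta>"
    unfolding partition_fn_def
  proof (rule integral_mono)
    show "integrable lebesgue (\<lambda>y. indicator X y * exp (- c))"
      by (rule integrable_indicator_mult[of _ "exp (- c)"]) auto
    show "indicator X y * exp (- c) \<le> indicator X y * exp (frob_ip \<Theta> (\<Phi> y))" for y
      using c by (auto simp: indicator_def)
  qed (rule integrable_exp_frob_ip)
  finally show ?thesis .
qed

lemma exp_fam_density_measurable: "exp_fam_density X \<Phi> \<Theta> \<in> borel_measurable lebesgue"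
  unfolding exp_fam_density_eq[abs_def] using integrable_exp_frob_ip by measurable

lemma prob_space_exp_fam_dist: "prob_space (exp_fam_dist X \<Phi> \<Theta>)"
proof (rule prob_spaceI)
  have "emeasure (exp_fam_dist X \<Phi> \<Theta>) (space (exp_fam_dist X \<Phi> \<Theta>))
      = (\<integral>\<^sup>+ x. ennreal (exp_fam_density X \<Phi> \<Theta> x) \<partial>lebesgue)"
    unfolding exp_fam_dist_def using exp_fam_density_measurable by (simp add: emeasure_density)
  also have "\<dots> = ennreal (\<integral>x. exp_fam_density X \<Phi> \<Theta> x \<partial>lebesgue)"
    unfolding exp_fam_density_eq using integrable_exp_frob_ip partition_fn_pos
    by (intro nn_integral_eq_integral AE_I2) (auto intro: divide_nonneg_pos)
  also have "(\<integral>x. exp_fam_density X \<Phi> \<Theta> x \<partial>lebesgue) = 1"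
    using partition_fn_pos[of \<Theta>] unfolding exp_fam_density_eq by (simp add: partition_fn_def)
  finally show "emeasure (exp_fam_dist X \<Phi> \<Theta>) (space (exp_fam_dist X \<Phi> \<Theta>)) = 1" by simp
qed

lemma AE_exp_fam_dist_mem: "AE x in exp_fam_dist X \<Phi> \<Theta>. x \<in> X"
proof -
  have "(\<lambda>x. ennreal (exp_fam_density X \<Phi> \<Theta> x)) \<in> borel_measurable lebesgue"
    using exp_fam_density_measurable by measurable
  then show ?thesis
    unfolding exp_fam_dist_def
    by (subst AE_density) (auto simp: exp_fam_density_eq indicator_def)
qed

lemma integral_grad_term_exp_fam_dist: "(\<integral>x. grad_term X \<Phi> \<Theta> u v x \<partial>exp_fam_dist X \<Phi> \<Theta>) = 0"
proof -
  define c where "c = uniform_mean X \<Phi>"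
  define K where "K = exp (frob_ip \<Theta> c) / partition_fn X \<Phi> \<Theta>"
  have density_grad_term:
    "exp_fam_density X \<Phi> \<Theta> x * grad_term X \<Phi> \<Theta> u v x
       = K * c $ u $ v * indicator X x - K * (indicator X x * \<Phi> x $ u $ v)" for x
  proof -
    have "exp_fam_density X \<Phi> \<Theta> x * grad_term X \<Phi> \<Theta> u v x
        = indicator X x * (c $ u $ v - \<Phi> x $ u $ v)
          * (exp (frob_ip \<Theta> (\<Phi> x)) * exp (- frob_ip \<Theta> (\<Phi> x - c))) / partition_fn X \<Phi> \<Theta>"
      unfolding exp_fam_density_eq grad_term_def Phi_tilde_uniform_mean c_def by simp
    also have "exp (frob_ip \<Theta> (\<Phi> x)) * exp (- frob_ip \<Theta> (\<Phi> x - c)) = exp (frob_ip \<Theta> c)"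
      unfolding frob_ip_eq_inner inner_diff_right by (simp flip: exp_add)
    finally show ?thesis
      using partition_fn_pos[of \<Theta>] unfolding K_def by (simp add: field_simps)
  qed
  have integrable_entry: "integrable lebesgue (\<lambda>x. indicator X x * \<Phi> x $ u $ v)"
    using integrable_bounded_linear[OF bounded_linear_mat_entry integrable_indicator_scaleR_Phi] by simp
  have "(\<integral>x. grad_term X \<Phi> \<Theta> u v x \<partial>exp_fam_dist X \<Phi> \<Theta>)
      = (\<integral>x. exp_fam_density X \<Phi> \<Theta> x * grad_term X \<Phi> \<Theta> u v x \<partial>lebesgue)"
    unfolding exp_fam_dist_def
    using grad_term_measurable[OF Phi_measurable] exp_fam_density_measurable
    by (subst integral_density) (auto simp: exp_fam_density_eq partition_fn_pos less_imp_le)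
  also have "\<dots> = K * c $ u $ v * measure lebesgue X - K * (\<integral>x. indicator X x * \<Phi> x $ u $ v \<partial>lebesgue)"
    unfolding density_grad_term using integrable_entry X_lmeasurable
    by (simp add: lmeasurable_iff_integrable integral_indicator)
  also have "\<dots> = 0"
    using linear_uniform_mean[OF bounded_linear_mat_entry] measure_X_pos
    unfolding c_def by simp
  finally show ?thesis .
qed

lemma sets_grad_loss_n_entry_gt:
  "{xs \<in> space (PiM {..<n} (\<lambda>_. exp_fam_dist X \<Phi> \<Theta>)). \<epsilon> < \<bar>grad_loss_n X \<Phi> n xs \<Theta> $ u $ v\<bar>}
     \<in> sets (PiM {..<n} (\<lambda>_. exp_fam_dist X \<Phi> \<Theta>))"
  unfolding grad_loss_n_entry using grad_term_measurable[OF Phi_measurable]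
  by (simp add: exp_fam_dist_def) measurable

lemma prob_abs_grad_loss_n_entry_gt:
  assumes max_bound: "\<forall>x\<in>X. max_norm (\<Phi> x) \<le> \<phi>" and frob_bound: "\<forall>x\<in>X. \<bar>frob_ip \<Theta> (\<Phi> x)\<bar> \<le> c"
    and "0 < L" "0 < \<epsilon>" and n: "2 * (2 * \<phi> * exp (2 * c))\<^sup>2 * L / \<epsilon>\<^sup>2 < real n"
  shows "measure (PiM {..<n} (\<lambda>_. exp_fam_dist X \<Phi> \<Theta>))
           {xs \<in> space (PiM {..<n} (\<lambda>_. exp_fam_dist X \<Phi> \<Theta>)). \<epsilon> < \<bar>grad_loss_n X \<Phi> n xs \<Theta> $ u $ v\<bar>}
         \<le> 2 * exp (- L)"
proof -
  let ?P = "exp_fam_dist X \<Phi> \<Theta>"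
  let ?M = "PiM {..<n} (\<lambda>_. ?P)"
  interpret M: prob_space ?M
    using prob_space_exp_fam_dist by (rule prob_space_PiM)
  have grad_term_P [measurable]: "grad_term X \<Phi> \<Theta> u v \<in> borel_measurable ?P"
    unfolding exp_fam_dist_def using grad_term_measurable[OF Phi_measurable] by simp
  obtain x where "x \<in> X"
    using X_pos by fastforce
  then have "\<bar>\<Phi> x $ u $ v\<bar> \<le> \<phi>"
    using max_bound by (simp add: max_norm_le_iff)
  then have "0 \<le> 2 * \<phi> * exp (2 * c)"
    using order_trans[OF abs_ge_zero] by simp
  have bound: "AE x in ?P. \<bar>grad_term X \<Phi> \<Theta> u v x\<bar> \<le> 2 * \<phi> * exp (2 * c)"
    using AE_exp_fam_dist_mem by eventually_elim (rule abs_grad_term_le[OF max_bound frob_bound])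
  have "real n * \<epsilon> \<le> \<bar>S\<bar>" if "\<epsilon> < \<bar>S / real n\<bar>" for S
    using that \<open>0 < \<epsilon>\<close> by (cases "n = 0") (auto simp: field_simps)
  then have "measure ?M {xs \<in> space ?M. \<epsilon> < \<bar>grad_loss_n X \<Phi> n xs \<Theta> $ u $ v\<bar>}
      \<le> measure ?M {xs \<in> space ?M. real n * \<epsilon> \<le> \<bar>\<Sum>t<n. grad_term X \<Phi> \<Theta> u v (xs t)\<bar>}"
    unfolding grad_loss_n_entry by (intro M.finite_measure_mono) auto
  also have "\<dots> \<le> 2 * exp (- L)"
    by (rule prob_abs_sum_iid_ge_sample_size[OF prob_space_exp_fam_dist grad_term_P bound
          integral_grad_term_exp_fam_dist \<open>0 \<le> 2 * \<phi> * exp (2 * c)\<close> \<open>0 < L\<close> \<open>0 < \<epsilon>\<close> n])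
  finally show ?thesis .
qed

end

theorem propositionE1:
  fixes X :: "(real ^ 'p::finite) set"
    and \<Phi> :: "real ^ 'p \<Rightarrow> real ^ 'k2::finite ^ 'k1::finite"
    and R :: "real ^ 'k2 ^ 'k1 \<Rightarrow> real"
    and \<Theta>s :: "real ^ 'k2 ^ 'k1"
    and r d \<phi>max \<delta> \<epsilon> :: real
    and n :: nat
  assumes X_meas: "X \<in> sets lebesgue"
    and X_bounded: "bounded X"
    and X_pos: "0 < emeasure lebesgue X"
    and Phi_meas: "\<Phi> \<in> borel_measurable lebesgue"
    and R_norm: "is_norm R"
    and R_Theta: "R \<Theta>s \<le> r"
    and dual_bound: "\<forall>x\<in>X. dual_norm R (\<Phi> x) \<le> d"
    and max_bound: "\<forall>x\<in>X. max_norm (\<Phi> x) \<le> \<phi>max"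
    and delta: "0 < \<delta>" "\<delta> < 1"
    and eps: "0 < \<epsilon>"
    and n_large: "real n > 8 * \<phi>max ^ 2 * exp (4 * r * d) / \<epsilon> ^ 2
                          * ln (2 * real CARD('k1) * real CARD('k2) / \<delta>)"
  shows "measure (PiM {..<n} (\<lambda>_. exp_fam_dist X \<Phi> \<Theta>s))
           {xs \<in> space (PiM {..<n} (\<lambda>_. exp_fam_dist X \<Phi> \<Theta>s)).
              max_norm (grad_loss_n X \<Phi> n xs \<Theta>s) \<le> \<epsilon>} \<ge> 1 - \<delta>"
proof -
  have "bounded (\<Phi> ` X)"
    using max_bound norm_le_entry_bound unfolding bounded_iff max_norm_le_iff by blast
  then interpret bounded_statistic X \<Phi>
    using X_meas X_bounded X_pos Phi_meas by unfold_locales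
  let ?M = "PiM {..<n} (\<lambda>_. exp_fam_dist X \<Phi> \<Theta>s)"
  interpret M: prob_space ?M
    using prob_space_exp_fam_dist by (rule prob_space_PiM)
  define k where "k = real CARD('k1) * real CARD('k2)"
  have "1 \<le> k"
    unfolding k_def by (simp add: Suc_le_eq flip: of_nat_mult)
  have "\<forall>x\<in>X. \<bar>frob_ip \<Theta>s (\<Phi> x)\<bar> \<le> r * d"
    using abs_frob_ip_le_of_bounds[OF R_norm R_Theta] dual_bound by blast
  moreover have "2 * (2 * \<phi>max * exp (2 * (r * d)))\<^sup>2 * ln (2 * k / \<delta>) / \<epsilon>\<^sup>2 < real n"
  proof -
    have "(exp (2 * (r * d)))\<^sup>2 = exp (4 * (r * d))"
      by (simp add: power2_eq_square flip: exp_add)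
    with n_large show ?thesis
      by (simp add: k_def power_mult_distrib mult.assoc)
  qed
  ultimately have "M.prob {xs \<in> space ?M. \<epsilon> < \<bar>grad_loss_n X \<Phi> n xs \<Theta>s $ u $ v\<bar>} \<le> 2 * exp (- ln (2 * k / \<delta>))"
    for u v
    using max_bound \<open>1 \<le> k\<close> delta eps by (intro prob_abs_grad_loss_n_entry_gt) auto
  also have "2 * exp (- ln (2 * k / \<delta>)) = \<delta> / k"
    using \<open>1 \<le> k\<close> delta by (simp add: exp_minus)
  finally have tail: "M.prob {xs \<in> space ?M. \<epsilon> < \<bar>grad_loss_n X \<Phi> n xs \<Theta>s $ u $ v\<bar>} \<le> \<delta> / k" for u v .
  from M.prob_max_norm_le_ge[OF sets_grad_loss_n_entry_gt tail] show ?thesis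
    using \<open>1 \<le> k\<close> by (simp add: k_def)
qed

end
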